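(* Let $d\ge 2$. For every integer $N$ there exist finite point sets $P,Q\subset\mathbb{R}^d$ that are not $(1,2)$-separable, but such that every pair of subsets $P^*\subseteq P$, $Q^*\subseteq Q$ with $|P^*|+|Q^*|\le N$ is $(1,2)$-separable. In particular, $(1,2)$-separability does not have the Helly-type property in $\mathbb{R}^d$ (its Helly number is infinite).
   Context: Finite sets $P,Q\subset\mathbb{R}^d$ are $(b,c)$-separable if there exist convex sets $S_1,\dots,S_b$ and $T_1,\dots,T_c$ with $S=\bigcup_i S_i$, $T=\bigcup_j T_j$, $S\cap T=\emptyset$, and either ($P\subseteq S$ and $Q\subseteq T$) or ($Q\subseteq S$ and $P\subseteq T$). A predicate $F$ on pairs of finite point sets has the Helly-type property in $\mathbb{R}^d$ if there is a finite $m$ such that whenever $F(P,Q)$ fails there exist $P^*\subseteq P$, $Q^*\subseteq Q$ with $|P^*|+|Q^*|\le m$ for which $F(P^*,Q^* )$ fails. *)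

theory Defs
  imports "HOL-Analysis.Analysis"
begin

definition separable :: "nat \<Rightarrow> nat \<Rightarrow> 'a::euclidean_space set \<Rightarrow> 'a set \<Rightarrow> bool" where
  "separable b c P Q \<longleftrightarrow>
     (\<exists>S T :: nat \<Rightarrow> 'a set.
        (\<forall>i<b. convex (S i)) \<and> (\<forall>j<c. convex (T j)) \<and>
        (\<Union>i<b. S i) \<inter> (\<Union>j<c. T j) = {} \<and>
        ((P \<subseteq> (\<Union>i<b. S i) \<and> Q \<subseteq> (\<Union>j<c. T j)) \<or>
         (Q \<subseteq> (\<Union>i<b. S i) \<and> P \<subseteq> (\<Union>j<c. T j))))"

definition helly_type :: "('a::euclidean_space set \<Rightarrow> 'a set \<Rightarrow> bool) \<Rightarrow> bool" where
  "helly_type F \<longleftrightarrow>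
     (\<exists>m::nat. \<forall>P Q :: 'a set. finite P \<and> finite Q \<and> \<not> F P Q \<longrightarrow>
        (\<exists>P' Q'. P' \<subseteq> P \<and> Q' \<subseteq> Q \<and> card P' + card Q' \<le> m \<and> \<not> F P' Q'))"

end

theory Submission
  imports Defs
begin

text \<open>Take a regular (2k+1)-gon on a unit circle in a 2-plane as Q, and as P the midpoints of its
  diagonals joining vertex i to vertex i + k. A convex set containing Q contains P, so Q cannot be
  the single convex side. If P lies in the convex side S, the two endpoints of each diagonal lie in
  different convex sets T0, T1, so membership in T0 two-colours the cycle i \<mapsto> i + k, which has
  odd length 2k+1: impossible. All midpoints lie in the disc of radius \<rho> = cos(\<pi>k/(2k+1)), and
  once one vertex is removed the remaining 2k vertices form two arcs of k consecutive vertices,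
  each cut off from that disc by a half-plane. Subpairs with at most N points miss a vertex as
  soon as 2k+1 > N.\<close>

lemma separable_1_2_iff:
  "separable 1 2 P Q \<longleftrightarrow>
    (\<exists>S T0 T1. convex S \<and> convex T0 \<and> convex T1 \<and> S \<inter> (T0 \<union> T1) = {} \<and>
      ((P \<subseteq> S \<and> Q \<subseteq> T0 \<union> T1) \<or> (Q \<subseteq> S \<and> P \<subseteq> T0 \<union> T1)))"
proof -
  have one: "{..<1::nat} = {0}" and two: "{..<2::nat} = {0, 1}" by auto
  show ?thesis
  proof
    assume "separable 1 2 P Q"
    then obtain S T :: "nat \<Rightarrow> _" where "convex (S 0)" "convex (T 0)" "convex (T 1)"
      "S 0 \<inter> (T 0 \<union> T 1) = {}"
      "(P \<subseteq> S 0 \<and> Q \<subseteq> T 0 \<union> T 1) \<or> (Q \<subseteq> S 0 \<and> P \<subseteq> T 0 \<union> T 1)"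
      unfolding separable_def one two by (auto simp: less_2_cases_iff)
    then show "\<exists>S T0 T1. convex S \<and> convex T0 \<and> convex T1 \<and> S \<inter> (T0 \<union> T1) = {} \<and>
      ((P \<subseteq> S \<and> Q \<subseteq> T0 \<union> T1) \<or> (Q \<subseteq> S \<and> P \<subseteq> T0 \<union> T1))" by blast
  next
    assume "\<exists>S T0 T1. convex S \<and> convex T0 \<and> convex T1 \<and> S \<inter> (T0 \<union> T1) = {} \<and>
      ((P \<subseteq> S \<and> Q \<subseteq> T0 \<union> T1) \<or> (Q \<subseteq> S \<and> P \<subseteq> T0 \<union> T1))"
    then obtain S T0 T1 where "convex S" "convex T0" "convex T1" "S \<inter> (T0 \<union> T1) = {}"
      "(P \<subseteq> S \<and> Q \<subseteq> T0 \<union> T1) \<or> (Q \<subseteq> S \<and> P \<subseteq> T0 \<union> T1)" by blast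
    then show "separable 1 2 P Q"
      unfolding separable_def one two
      by - (rule exI[of _ "\<lambda>_. S"], rule exI[of _ "\<lambda>j. if j = 0 then T0 else T1"],
        simp add: less_2_cases_iff Un_commute)
  qed
qed

lemma separable_subset:
  assumes "separable b c P Q" "P' \<subseteq> P" "Q' \<subseteq> Q"
  shows "separable b c P' Q'"
proof -
  obtain S T where "\<forall>i<b. convex (S i)" "\<forall>j<c. convex (T j)"
    "(\<Union>i<b. S i) \<inter> (\<Union>j<c. T j) = {}"
    and sides: "(P \<subseteq> (\<Union>i<b. S i) \<and> Q \<subseteq> (\<Union>j<c. T j)) \<or> (Q \<subseteq> (\<Union>i<b. S i) \<and> P \<subseteq> (\<Union>j<c. T j))"
    using assms(1) unfolding separable_def by blast
  moreover have "(P' \<subseteq> (\<Union>i<b. S i) \<and> Q' \<subseteq> (\<Union>j<c. T j)) \<or>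
      (Q' \<subseteq> (\<Union>i<b. S i) \<and> P' \<subseteq> (\<Union>j<c. T j))"
    using sides assms(2,3) by blast
  ultimately show ?thesis
    unfolding separable_def by blast
qed

lemma not_helly_type_if_unbounded:
  assumes "\<And>N::int. \<exists>P Q. finite P \<and> finite Q \<and> \<not> F P Q \<and>
     (\<forall>P' Q'. P' \<subseteq> P \<and> Q' \<subseteq> Q \<and> int (card P' + card Q') \<le> N \<longrightarrow> F P' Q')"
  shows "\<not> helly_type F"
proof
  assume "helly_type F"
  then obtain m where m: "\<forall>P Q. finite P \<and> finite Q \<and> \<not> F P Q \<longrightarrow>
      (\<exists>P' Q'. P' \<subseteq> P \<and> Q' \<subseteq> Q \<and> card P' + card Q' \<le> m \<and> \<not> F P' Q')"
    unfolding helly_type_def by blast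
  obtain P Q where PQ: "finite P" "finite Q" "\<not> F P Q"
    and small: "\<forall>P' Q'. P' \<subseteq> P \<and> Q' \<subseteq> Q \<and> int (card P' + card Q') \<le> int m \<longrightarrow> F P' Q'"
    using assms[of "int m"] by blast
  obtain P' Q' where "P' \<subseteq> P" "Q' \<subseteq> Q" "card P' + card Q' \<le> m" "\<not> F P' Q'"
    using m[rule_format, of P Q] PQ by blast
  then show False
    using small[rule_format, of P' Q'] by simp
qed

lemma exists_orthonormal_pair:
  assumes "DIM('a) \<ge> 2"
  obtains e1 e2 :: "'a::euclidean_space" where "e1 \<bullet> e1 = 1" "e2 \<bullet> e2 = 1" "e1 \<bullet> e2 = 0"
proof -
  obtain e1 :: 'a where e1: "e1 \<in> Basis" using nonempty_Basis by blast
  have "card (Basis - {e1}) \<noteq> 0" using assms e1 by (simp add: card_Diff_singleton)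
  then obtain e2 where "e2 \<in> Basis" "e2 \<noteq> e1"
    by (metis card.empty ex_in_conv DiffE singletonI)
  with e1 show ?thesis
    using that[of e1 e2] by (simp add: inner_Basis)
qed

lemma odd_cycle_not_two_colourable:
  fixes c :: "int \<Rightarrow> bool"
  assumes flip: "\<And>i. c (i + int k) \<longleftrightarrow> \<not> c i"
    and periodic: "\<And>i. c (i + (2 * int k + 1)) \<longleftrightarrow> c i"
  shows False
proof -
  have step: "c (i - 1) \<longleftrightarrow> c i" for i
    using flip[of i] flip[of "i + int k"] periodic[of "i - 1"] by (simp add: algebra_simps)
  have "c (int j) \<longleftrightarrow> c 0" for j
  proof (induction j)
    case (Suc j)
    then show ?case
      using step[of "int (Suc j)"] by simp
  qed simp
  then show False
    using flip[of 0] by simp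
qed

locale odd_polygon =
  fixes e1 e2 :: "'a::euclidean_space" and k :: nat
  assumes e1_unit: "e1 \<bullet> e1 = 1" and e2_unit: "e2 \<bullet> e2 = 1" and e1_e2_orth: "e1 \<bullet> e2 = 0"
begin

definition "n = 2 * k + 1"

definition "\<alpha> = 2 * pi / real n"

text \<open>Positions on the circle are measured in units of the central angle \<alpha>, so that vertex i
  sits at position i and a run of vertices is centred at the average of its positions.\<close>

definition "dir s = cos (\<alpha> * s) *\<^sub>R e1 + sin (\<alpha> * s) *\<^sub>R e2"

definition "vertex i = dir (of_int i)"

definition "diag_mid i = midpoint (vertex i) (vertex (i + int k))"

definition "\<rho> = cos (\<alpha> * real k / 2)"

definition "vertices = range vertex"

definition "diag_mids = range diag_mid"

lemma n_pos: "n > 0"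
  by (simp add: n_def)

lemma alpha_pos: "\<alpha> > 0"
  using n_pos by (simp add: \<alpha>_def)

lemma alpha_times_n: "\<alpha> * real n = 2 * pi"
  using n_pos by (simp add: \<alpha>_def)

lemma half_diag_angle_less: "\<alpha> * real k / 2 < pi / 2"
proof -
  have "\<alpha> * real k / 2 = pi * (real k / real (2 * k + 1))"
    by (simp add: \<alpha>_def n_def field_simps)
  moreover have "real k / real (2 * k + 1) < 1 / 2"
    by (simp add: divide_less_eq)
  ultimately show ?thesis
    using pi_gt_zero by (metis mult_strict_left_mono times_divide_eq_right mult_1_right)
qed

lemma rho_pos: "\<rho> > 0"
proof -
  have "0 \<le> \<alpha> * real k / 2"
    using alpha_pos by simp
  then show ?thesis
    unfolding \<rho>_def using half_diag_angle_less by (intro cos_gt_zero_pi) auto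
qed

lemma dir_inner_dir: "dir s \<bullet> dir t = cos (\<alpha> * (s - t))"
proof -
  have "dir s \<bullet> dir t = cos (\<alpha> * s) * cos (\<alpha> * t) * (e1 \<bullet> e1)
      + sin (\<alpha> * s) * sin (\<alpha> * t) * (e2 \<bullet> e2)
      + (cos (\<alpha> * s) * sin (\<alpha> * t) + sin (\<alpha> * s) * cos (\<alpha> * t)) * (e1 \<bullet> e2)"
    by (simp add: dir_def inner_add_left inner_add_right inner_commute algebra_simps)
  then show ?thesis
    using e1_unit e2_unit e1_e2_orth by (simp add: cos_diff right_diff_distrib)
qed

lemma diag_mid_inner_dir:
  "diag_mid i \<bullet> dir s = \<rho> * cos (\<alpha> * (of_int i + real k / 2 - s))"
proof -
  define A where "A = \<alpha> * (of_int i + real k / 2 - s)"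
  define B where "B = \<alpha> * real k / 2"
  have "diag_mid i \<bullet> dir s = (cos (A - B) + cos (A + B)) / 2"
    by (simp add: diag_mid_def midpoint_def vertex_def dir_inner_dir inner_add_left A_def B_def
        algebra_simps)
  also have "\<dots> = cos B * cos A"
    by (simp add: cos_add cos_diff)
  finally show ?thesis
    by (simp add: \<rho>_def A_def B_def)
qed

lemma diag_mid_inner_dir_le: "diag_mid i \<bullet> dir s \<le> \<rho>"
  unfolding diag_mid_inner_dir using rho_pos by (simp add: mult_left_le)

lemma rho_less_cos:
  assumes "\<bar>s\<bar> \<le> (real k - 1) / 2"
  shows "\<rho> < cos (\<alpha> * s)"
proof -
  have "\<bar>\<alpha> * s\<bar> \<le> \<alpha> * ((real k - 1) / 2)"
    using assms alpha_pos by (simp add: abs_mult mult_left_mono)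
  also have "\<dots> < \<alpha> * real k / 2"
    using alpha_pos by (simp add: field_simps)
  finally have "\<bar>\<alpha> * s\<bar> < \<alpha> * real k / 2" .
  moreover have "\<alpha> * real k / 2 \<le> pi"
    using half_diag_angle_less pi_gt_zero by linarith
  ultimately have "cos (\<alpha> * real k / 2) < cos \<bar>\<alpha> * s\<bar>"
    by (intro cos_monotone_0_pi) auto
  then show ?thesis
    by (simp add: \<rho>_def)
qed

lemma vertex_periodic: "vertex (i + int n * m) = vertex i"
proof -
  have "\<alpha> * of_int (i + int n * m) = \<alpha> * of_int i + 2 * pi * of_int m"
    using alpha_times_n by (simp add: algebra_simps)
  then show ?thesis
    by (simp add: vertex_def dir_def cos_add sin_add)
qed

lemma vertex_representative:
  obtains t where "0 \<le> t" "t < int n" "vertex i = vertex (j + t)"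
proof
  show "0 \<le> (i - j) mod int n" "(i - j) mod int n < int n"
    using n_pos by simp_all
  show "vertex i = vertex (j + (i - j) mod int n)"
    using vertex_periodic[of "j + (i - j) mod int n" "(i - j) div int n"]
    by (simp add: algebra_simps)
qed

lemma inj_on_vertex: "inj_on vertex {0..<int n}"
proof (rule inj_onI, rule ccontr)
  fix i j assume ij: "i \<in> {0..<int n}" "j \<in> {0..<int n}" "vertex i = vertex j" "i \<noteq> j"
  have "cos (\<alpha> * of_int (i - j)) = 1"
    using ij(3) dir_inner_dir[of "of_int j" "of_int j"] dir_inner_dir[of "of_int i" "of_int j"]
    by (simp add: vertex_def)
  then obtain m :: int where "\<alpha> * of_int (i - j) = of_int m * 2 * pi"
    by (auto simp: cos_one_2pi_int)
  then have "\<alpha> * of_int (i - j) = \<alpha> * of_int (int n * m)"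
    using alpha_times_n by (simp add: algebra_simps)
  then have "i - j = int n * m"
    using alpha_pos of_int_eq_iff by fastforce
  then have "int n dvd (i - j)"
    by simp
  then have "i mod int n = j mod int n"
    by (simp add: mod_eq_dvd_iff)
  then show False
    using ij by simp
qed

lemma vertices_eq: "vertices = vertex ` {0..<int n}"
proof
  show "vertices \<subseteq> vertex ` {0..<int n}"
  proof
    fix x assume "x \<in> vertices"
    then obtain i where "x = vertex i"
      by (auto simp: vertices_def)
    moreover obtain t where "0 \<le> t" "t < int n" "vertex i = vertex (0 + t)"
      by (rule vertex_representative)
    ultimately show "x \<in> vertex ` {0..<int n}"
      by auto
  qed
qed (auto simp: vertices_def)

lemma card_vertices: "card vertices = n"
  using card_image[OF inj_on_vertex] by (simp add: vertices_eq)

lemma finite_vertices: "finite vertices"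
  by (simp add: vertices_eq)

lemma finite_diag_mids: "finite diag_mids"
proof (rule finite_subset)
  show "diag_mids \<subseteq> (\<lambda>(a, b). midpoint a b) ` (vertices \<times> vertices)"
    by (auto simp: diag_mids_def diag_mid_def vertices_def)
qed (simp add: finite_vertices)

lemma diag_mid_in_convex:
  "convex C \<Longrightarrow> vertex i \<in> C \<Longrightarrow> vertex (i + int k) \<in> C \<Longrightarrow> diag_mid i \<in> C"
  using convexD[of C "vertex i" "vertex (i + int k)" "1/2" "1/2"]
  by (simp add: diag_mid_def midpoint_def scaleR_right_distrib)

lemma not_separable: "\<not> separable 1 2 diag_mids vertices"
proof
  assume "separable 1 2 diag_mids vertices"
  then obtain S T0 T1 where conv: "convex S" "convex T0" "convex T1"
    and disj: "S \<inter> (T0 \<union> T1) = {}"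
    and sides: "(diag_mids \<subseteq> S \<and> vertices \<subseteq> T0 \<union> T1) \<or> (vertices \<subseteq> S \<and> diag_mids \<subseteq> T0 \<union> T1)"
    unfolding separable_1_2_iff by blast
  consider "vertices \<subseteq> S" "diag_mids \<subseteq> T0 \<union> T1" | "diag_mids \<subseteq> S" "vertices \<subseteq> T0 \<union> T1"
    using sides by blast
  then show False
  proof cases
    case 1
    then have "diag_mid 0 \<in> S \<inter> (T0 \<union> T1)"
      using diag_mid_in_convex[OF conv(1), of 0] unfolding vertices_def diag_mids_def by blast
    then show False
      using disj by blast
  next
    case 2
    then have mids: "diag_mids \<subseteq> S" and verts: "vertices \<subseteq> T0 \<union> T1"
      by auto
    define colour where "colour i \<longleftrightarrow> vertex i \<in> T0" for i
    have flip: "colour (i + int k) \<longleftrightarrow> \<not> colour i" for i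
    proof -
      have "diag_mid i \<notin> T0" "diag_mid i \<notin> T1"
        using mids disj by (auto simp: diag_mids_def)
      moreover have "vertex i \<in> T0 \<union> T1" "vertex (i + int k) \<in> T0 \<union> T1"
        using verts by (auto simp: vertices_def)
      ultimately show ?thesis
        using diag_mid_in_convex[OF conv(2), of i] diag_mid_in_convex[OF conv(3), of i]
        unfolding colour_def by blast
    qed
    have "colour (i + (2 * int k + 1)) \<longleftrightarrow> colour i" for i
      using vertex_periodic[of i 1] by (simp add: colour_def n_def add.commute)
    with flip show False
      by (rule odd_cycle_not_two_colourable)
  qed
qed

lemma arc_beyond_rho:
  assumes "0 \<le> t" "t \<le> int k - 1"
  shows "\<rho> < vertex (j + t) \<bullet> dir (of_int j + (real k - 1) / 2)"
proof -
  have "0 \<le> real_of_int t" "real_of_int t \<le> real k - 1"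
    using assms by simp_all
  then show ?thesis
    unfolding vertex_def dir_inner_dir by (intro rho_less_cos) (simp add: abs_le_iff field_simps)
qed

lemma separable_remove_vertex: "separable 1 2 diag_mids (vertices - {vertex j})"
proof -
  define u0 where "u0 = dir (of_int (j + 1) + (real k - 1) / 2)"
  define u1 where "u1 = dir (of_int (j + 1 + int k) + (real k - 1) / 2)"
  let ?S = "{x. u0 \<bullet> x \<le> \<rho>} \<inter> {x. u1 \<bullet> x \<le> \<rho>}"
  have mids: "diag_mids \<subseteq> ?S"
    using diag_mid_inner_dir_le by (auto simp: diag_mids_def u0_def u1_def inner_commute)
  have verts: "vertices - {vertex j} \<subseteq> {x. u0 \<bullet> x > \<rho>} \<union> {x. u1 \<bullet> x > \<rho>}"
  proof
    fix x assume "x \<in> vertices - {vertex j}"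
    then obtain i where x: "x = vertex i" and ne: "vertex i \<noteq> vertex j"
      by (auto simp: vertices_def)
    obtain t where t: "0 \<le> t" "t < int n" and xt: "x = vertex (j + 1 + t)"
      using vertex_representative[of i "j + 1"] x by blast
    have "t \<noteq> int n - 1"
      using ne x xt vertex_periodic[of j 1] by auto
    then consider "t \<le> int k - 1" | "int k \<le> t" "t - int k \<le> int k - 1"
      using t by (fastforce simp: n_def)
    then show "x \<in> {x. u0 \<bullet> x > \<rho>} \<union> {x. u1 \<bullet> x > \<rho>}"
    proof cases
      case 1
      then show ?thesis
        using arc_beyond_rho[of t "j + 1"] t by (simp add: xt u0_def inner_commute)
    next
      case 2
      then have "\<rho> < vertex (j + 1 + int k + (t - int k)) \<bullet> u1"
        unfolding u1_def by (intro arc_beyond_rho) simp_all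
      then show ?thesis
        by (simp add: xt inner_commute add.assoc)
    qed
  qed
  show ?thesis
    unfolding separable_1_2_iff
    by (rule exI[of _ ?S], rule exI[of _ "{x. u0 \<bullet> x > \<rho>}"], rule exI[of _ "{x. u1 \<bullet> x > \<rho>}"])
      (use mids verts in \<open>auto intro: convex_Int convex_halfspace_le convex_halfspace_gt\<close>)
qed

lemma separable_if_card_less:
  assumes "P \<subseteq> diag_mids" "Q \<subseteq> vertices" "card Q < n"
  shows "separable 1 2 P Q"
proof -
  have "Q \<noteq> vertices"
    using assms(3) card_vertices by auto
  then obtain j where "vertex j \<notin> Q"
    using assms(2) by (auto simp: vertices_def)
  then have "Q \<subseteq> vertices - {vertex j}"
    using assms(2) by blast
  then show ?thesis
    by (rule separable_subset[OF separable_remove_vertex assms(1)])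
qed

end

theorem mainTheorem7:
  assumes "DIM('a::euclidean_space) \<ge> 2"
  shows "(\<forall>N::int. \<exists>P Q :: 'a set. finite P \<and> finite Q \<and>
            \<not> separable 1 2 P Q \<and>
            (\<forall>P' Q'. P' \<subseteq> P \<and> Q' \<subseteq> Q \<and> int (card P' + card Q') \<le> N
                 \<longrightarrow> separable 1 2 P' Q'))
         \<and> \<not> helly_type (separable 1 2 :: 'a set \<Rightarrow> 'a set \<Rightarrow> bool)"
proof -
  obtain e1 e2 :: 'a where orthonormal: "e1 \<bullet> e1 = 1" "e2 \<bullet> e2 = 1" "e1 \<bullet> e2 = 0"
    using exists_orthonormal_pair[OF assms] .
  have witness: "\<exists>P Q :: 'a set. finite P \<and> finite Q \<and> \<not> separable 1 2 P Q \<and>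
      (\<forall>P' Q'. P' \<subseteq> P \<and> Q' \<subseteq> Q \<and> int (card P' + card Q') \<le> N \<longrightarrow> separable 1 2 P' Q')"
    for N :: int
  proof -
    interpret odd_polygon e1 e2 "nat N"
      using orthonormal by unfold_locales
    show ?thesis
    proof (intro exI conjI allI impI)
      show "finite diag_mids" "finite vertices" "\<not> separable 1 2 diag_mids vertices"
        by (fact finite_diag_mids finite_vertices not_separable)+
      fix P' Q' :: "'a set"
      assume "P' \<subseteq> diag_mids \<and> Q' \<subseteq> vertices \<and> int (card P' + card Q') \<le> N"
      then show "separable 1 2 P' Q'"
        by (intro separable_if_card_less) (auto simp: n_def)
    qed
  qed
  show ?thesis
    using witness not_helly_type_if_unbounded[OF witness] by blast
qed

end
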